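(* The Recursive Measure satisfies the added-blocker postulate. For every SVG $\mathcal{G}=(N,\mathcal{W})$ and all $i,j\in N$ with $j$ not a dummy in $\mathcal{G}$: $$\frac{RM'^+_i(\mathcal{G})}{RM'^+_j(\mathcal{G})}=\frac{RM'^+_i(\mathcal{G}^Y)}{RM'^+_j(\mathcal{G}^Y)}\qquad\text{and}\qquad\frac{RM'^-_i(\mathcal{G})}{RM'^-_j(\mathcal{G})}=\frac{RM'^-_i(\mathcal{G}^N)}{RM'^-_j(\mathcal{G}^N)}.$$
   Context: A simple voting game (SVG) is a pair $\mathcal{G}=(N,\mathcal{W})$ with $N$ a nonempty finite set of players and $\mathcal{W}\subseteq 2^N$ monotone, $\emptyset\notin\mathcal{W}$, $N\in\mathcal{W}$. Divisions are identified with their YES-sets. Decisiveness and success: - Player $k$ is YES-decisive in $S$ if $k\in S\in\mathcal{W}$ and $S\setminus\{k\}\notin\mathcal{W}$. - Player $k$ is NO-decisive in $S$ if $k\notin S\notin\mathcal{W}$ and $S\cup\{k\}\in\mathcal{W}$. - A dummy is never decisive. - Player $k$ is successful in $S$ if ($k\in S\in\mathcal{W}$) or ($k\notin S\notin\mathcal{W}$). Loyal children: if $S\in\mathcal{W}$, they are the sets $S\setminus\{m\}\in\mathcal{W}$ with $m\in S$. If $S\notin\mathcal{W}$, they are the sets $S\cup\{m\}\notin\mathcal{W}$ with $m\notin S$. Recursive efficacy score $\alpha_k(S)$: - $\alpha_k(S)=1$ if $k$ is decisive; - $\alpha_k(S)=0$ if $k$ is not successful; - otherwise, the average of $\alpha_k$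 over the loyal children. For a game with $m$ players: - the a priori RM YES-power is $RM'^+_k=2^{-m}\sum_{S\ni k}\alpha_k(S)$; - the a priori RM NO-power is $RM'^-_k=2^{-m}\sum_{S\not\ni k}\alpha_k(S)$. For a new player $0\notin N$: - $\mathcal{G}^Y=(N\cup\{0\},\{S\cup\{0\}:S\in\mathcal{W}\})$; - $\mathcal{G}^N=(N\cup\{0\},\{S\cup\{0\}:S\subseteq N\}\cup\mathcal{W})$. *)

theory Defs
  imports Complex_Main
begin

definition svg :: "'a set \<Rightarrow> 'a set set \<Rightarrow> bool" where
  "svg N W \<longleftrightarrow> finite N \<and> N \<noteq> {} \<and> W \<subseteq> Pow N \<and>
     (\<forall>S T. S \<in> W \<and> S \<subseteq> T \<and> T \<subseteq> N \<longrightarrow> T \<in> W) \<and>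
     {} \<notin> W \<and> N \<in> W"

definition yes_decisive :: "'a set set \<Rightarrow> 'a \<Rightarrow> 'a set \<Rightarrow> bool" where
  "yes_decisive W k S \<longleftrightarrow> k \<in> S \<and> S \<in> W \<and> S - {k} \<notin> W"

definition no_decisive :: "'a set set \<Rightarrow> 'a \<Rightarrow> 'a set \<Rightarrow> bool" where
  "no_decisive W k S \<longleftrightarrow> k \<notin> S \<and> S \<notin> W \<and> insert k S \<in> W"

definition decisive :: "'a set set \<Rightarrow> 'a \<Rightarrow> 'a set \<Rightarrow> bool" where
  "decisive W k S \<longleftrightarrow> yes_decisive W k S \<or> no_decisive W k S"

definition successful :: "'a set set \<Rightarrow> 'a \<Rightarrow> 'a set \<Rightarrow> bool" where
  "successful W k S \<longleftrightarrow> (k \<in> S \<and> S \<in> W) \<or> (k \<notin> S \<and> S \<notin> W)"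

definition dummy :: "'a set \<Rightarrow> 'a set set \<Rightarrow> 'a \<Rightarrow> bool" where
  "dummy N W k \<longleftrightarrow> (\<forall>S. S \<subseteq> N \<longrightarrow> \<not> decisive W k S)"

definition loyal_children :: "'a set \<Rightarrow> 'a set set \<Rightarrow> 'a set \<Rightarrow> 'a set set" where
  "loyal_children N W S =
     (if S \<in> W then {S - {m} | m. m \<in> S \<and> S - {m} \<in> W}
      else {insert m S | m. m \<in> N \<and> m \<notin> S \<and> insert m S \<notin> W})"

text \<open>Along loyal children the cardinality (winning case) or co-cardinality (losing case)
  strictly decreases, so a budget of card N + 1 is never exhausted.\<close>
fun alpha_fuel :: "nat \<Rightarrow> 'a set \<Rightarrow> 'a set set \<Rightarrow> 'a \<Rightarrow> 'a set \<Rightarrow> real" where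
  "alpha_fuel 0 N W k S = 0"
| "alpha_fuel (Suc n) N W k S =
     (if decisive W k S then 1
      else if \<not> successful W k S then 0
      else (\<Sum>T\<in>loyal_children N W S. alpha_fuel n N W k T) / real (card (loyal_children N W S)))"

definition alpha :: "'a set \<Rightarrow> 'a set set \<Rightarrow> 'a \<Rightarrow> 'a set \<Rightarrow> real" where
  "alpha N W k S = alpha_fuel (Suc (card N)) N W k S"

definition RM_yes :: "'a set \<Rightarrow> 'a set set \<Rightarrow> 'a \<Rightarrow> real" where
  "RM_yes N W k = (\<Sum>S\<in>{S. S \<subseteq> N \<and> k \<in> S}. alpha N W k S) / 2 ^ card N"

definition RM_no :: "'a set \<Rightarrow> 'a set set \<Rightarrow> 'a \<Rightarrow> real" where
  "RM_no N W k = (\<Sum>S\<in>{S. S \<subseteq> N \<and> k \<notin> S}. alpha N W k S) / 2 ^ card N"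

text \<open>Adding a new player z (z \<notin> N): G^Y (z is a blocker / vetoer) and G^N.\<close>
definition W_Y :: "'a \<Rightarrow> 'a set set \<Rightarrow> 'a set set" where
  "W_Y z W = {insert z S | S. S \<in> W}"

definition W_N :: "'a \<Rightarrow> 'a set \<Rightarrow> 'a set set \<Rightarrow> 'a set set" where
  "W_N z N W = {insert z S | S. S \<subseteq> N} \<union> W"

end

theory Submission
  imports Defs
begin

text \<open>Adding a vetoer z: a division without z is lost, so every YES-voter i there is unsuccessful
  and scores 0, while inserting z into a division of N reproduces the original game together with
  its loyal children, so i keeps its score. Hence every RM YES-power is exactly halved. Dually,
  in \<open>G\<^sup>N\<close> a division containing z is won, so every NO-voter scores 0 there, and every RM NO-power is
  halved. Ratios of powers are therefore unchanged.\<close>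

lemma svgD: assumes "svg N W" shows "finite N" "W \<subseteq> Pow N"
  using assms unfolding svg_def by auto

lemma decisive_imp_successful: "decisive W k S \<Longrightarrow> successful W k S"
  unfolding decisive_def yes_decisive_def no_decisive_def successful_def by auto

lemma alpha_fuel_unsuccessful: "\<not> successful W k S \<Longrightarrow> alpha_fuel n N W k S = 0"
  by (cases n) (auto dest: decisive_imp_successful)

lemma loyal_children_eq_image:
  "loyal_children N W S = (if S \<in> W then (\<lambda>m. S - {m}) ` {m \<in> S. S - {m} \<in> W}
     else (\<lambda>m. insert m S) ` {m \<in> N - S. insert m S \<notin> W})"
  unfolding loyal_children_def by auto

lemma loyal_children_subset: "S \<subseteq> N \<Longrightarrow> T \<in> loyal_children N W S \<Longrightarrow> T \<subseteq> N"
  unfolding loyal_children_def by (auto split: if_splits)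

text \<open>The recursion along loyal children has depth at most the (co-)cardinality of the division.\<close>
lemma alpha_fuel_Suc_eq:
  assumes "finite N" "S \<subseteq> N" "(if S \<in> W then card S else card (N - S)) < n"
  shows "alpha_fuel (Suc n) N W k S = alpha_fuel n N W k S"
  using assms(2,3)
proof (induction n arbitrary: S)
  case 0 then show ?case by simp
next
  case (Suc n)
  have "alpha_fuel (Suc n) N W k T = alpha_fuel n N W k T" if T: "T \<in> loyal_children N W S" for T
  proof -
    have "T \<subseteq> N" using loyal_children_subset[OF Suc.prems(1) T] .
    moreover have "(if T \<in> W then card T else card (N - T)) < n"
    proof (cases "S \<in> W")
      case True
      then obtain m where "m \<in> S" "T = S - {m}" "T \<in> W"
        using T unfolding loyal_children_def by auto
      moreover have "card (S - {m}) < card S"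
        using \<open>m \<in> S\<close> Suc.prems(1) assms(1) by (meson card_Diff1_less finite_subset)
      ultimately show ?thesis using Suc.prems(2) True by auto
    next
      case False
      then obtain m where "m \<in> N" "m \<notin> S" "T = insert m S" "T \<notin> W"
        using T unfolding loyal_children_def by auto
      moreover have "card (N - insert m S) < card (N - S)"
        using \<open>m \<in> N\<close> \<open>m \<notin> S\<close> assms(1) by (metis Diff_iff Diff_insert card_Diff1_less finite_Diff)
      ultimately show ?thesis using Suc.prems(2) False by auto
    qed
    ultimately show ?thesis using Suc.IH by blast
  qed
  then show ?case
    by (simp only: alpha_fuel.simps(2)[of "Suc n"] alpha_fuel.simps(2)[of n] cong: sum.cong)
qed

lemma alpha_fuel_eq_alpha:
  assumes "finite N" "S \<subseteq> N" "card N < n"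
  shows "alpha_fuel n N W k S = alpha N W k S"
proof -
  obtain d where n: "n = Suc (card N) + d" using assms(3) less_iff_Suc_add by auto
  have "alpha_fuel (Suc (card N) + d) N W k S = alpha N W k S"
  proof (induction d)
    case (Suc d)
    have "(if S \<in> W then card S else card (N - S)) < Suc (card N) + d"
      using assms(1,2) card_mono[of N S] card_mono[of N "N - S"] by auto
    then show ?case using alpha_fuel_Suc_eq[OF assms(1,2)] Suc by simp
  qed (simp add: alpha_def)
  then show ?thesis unfolding n .
qed

lemma alpha_fuel_transfer:
  assumes inj: "inj_on f (Pow N)"
    and dec: "\<And>S. S \<subseteq> N \<Longrightarrow> decisive W' k (f S) \<longleftrightarrow> decisive W k S"
    and suc: "\<And>S. S \<subseteq> N \<Longrightarrow> successful W' k (f S) \<longleftrightarrow> successful W k S"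
    and lc: "\<And>S. S \<subseteq> N \<Longrightarrow> loyal_children N' W' (f S) = f ` loyal_children N W S"
    and "S \<subseteq> N"
  shows "alpha_fuel n N' W' k (f S) = alpha_fuel n N W k S"
  using \<open>S \<subseteq> N\<close>
proof (induction n arbitrary: S)
  case 0 then show ?case by simp
next
  case (Suc n)
  have children: "loyal_children N W S \<subseteq> Pow N"
    using loyal_children_subset[OF Suc.prems] by blast
  have inj_children: "inj_on f (loyal_children N W S)"
    using inj_on_subset[OF inj children] .
  have "(\<Sum>T\<in>loyal_children N' W' (f S). alpha_fuel n N' W' k T)
      = (\<Sum>T\<in>loyal_children N W S. alpha_fuel n N W k T)"
    unfolding lc[OF Suc.prems] sum.reindex[OF inj_children] o_def
    using children Suc.IH by (intro sum.cong) auto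
  moreover have "card (loyal_children N' W' (f S)) = card (loyal_children N W S)"
    unfolding lc[OF Suc.prems] using card_image[OF inj_children] .
  ultimately show ?case using dec[OF Suc.prems] suc[OF Suc.prems] by simp
qed

lemma sum_subsets_insert:
  assumes "finite N" "z \<notin> N"
  shows "(\<Sum>S | S \<subseteq> insert z N \<and> P S. g S)
       = (\<Sum>S | S \<subseteq> N \<and> P S. g S) + (\<Sum>S | S \<subseteq> N \<and> P (insert z S). g (insert z S))"
proof -
  have split: "{S. S \<subseteq> insert z N \<and> P S}
      = {S. S \<subseteq> N \<and> P S} \<union> insert z ` {S. S \<subseteq> N \<and> P (insert z S)}"
  proof (intro set_eqI iffI)
    fix S assume S: "S \<in> {S. S \<subseteq> insert z N \<and> P S}"
    show "S \<in> {S. S \<subseteq> N \<and> P S} \<union> insert z ` {S. S \<subseteq> N \<and> P (insert z S)}"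
    proof (cases "z \<in> S")
      case True
      then have "S = insert z (S - {z})" by blast
      moreover have "S - {z} \<in> {S. S \<subseteq> N \<and> P (insert z S)}"
        using S True by (simp add: insert_absorb) blast
      ultimately show ?thesis by blast
    qed (use S in blast)
  qed (use assms(2) in auto)
  have inj: "inj_on (insert z) {S. S \<subseteq> N \<and> P (insert z S)}"
    using assms(2) by (intro inj_onI) (metis Diff_insert_absorb mem_Collect_eq subsetD)
  show ?thesis
    unfolding split using assms
    by (subst sum.union_disjoint) (auto simp: sum.reindex[OF inj])
qed

lemma mem_W_Y_iff:
  assumes "W \<subseteq> Pow N" "z \<notin> N"
  shows "T \<in> W_Y z W \<longleftrightarrow> z \<in> T \<and> T - {z} \<in> W"
proof
  assume "T \<in> W_Y z W"
  then obtain S where "S \<in> W" "T = insert z S" unfolding W_Y_def by auto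
  moreover have "z \<notin> S" using \<open>S \<in> W\<close> assms by auto
  ultimately show "z \<in> T \<and> T - {z} \<in> W" by simp
next
  assume "z \<in> T \<and> T - {z} \<in> W"
  then show "T \<in> W_Y z W" unfolding W_Y_def by (auto intro!: exI[of _ "T - {z}"])
qed

lemma loyal_children_W_Y:
  assumes "W \<subseteq> Pow N" "z \<notin> N" "S \<subseteq> N"
  shows "loyal_children (insert z N) (W_Y z W) (insert z S) = insert z ` loyal_children N W S"
proof -
  have zS: "z \<notin> S" using assms by auto
  note mem = mem_W_Y_iff[OF assms(1,2)]
  have won: "insert z S \<in> W_Y z W \<longleftrightarrow> S \<in> W" using zS by (simp add: mem)
  show ?thesis
  proof (cases "S \<in> W")
    case True
    have "{m \<in> insert z S. insert z S - {m} \<in> W_Y z W} = {m \<in> S. S - {m} \<in> W}"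
      using zS by (auto simp: mem insert_Diff_if)
    moreover have "insert z S - {m} = insert z (S - {m})" if "m \<in> S" for m
      using that zS by auto
    ultimately show ?thesis
      using True won by (simp add: loyal_children_eq_image image_image)
  next
    case False
    have "{m \<in> insert z N - insert z S. insert m (insert z S) \<notin> W_Y z W}
        = {m \<in> N - S. insert m S \<notin> W}"
      using zS assms(2) by (auto simp: mem insert_Diff_if)
    then show ?thesis
      using False won by (simp add: loyal_children_eq_image image_image insert_commute)
  qed
qed

lemma alpha_W_Y:
  assumes "finite N" "W \<subseteq> Pow N" "z \<notin> N" "k \<noteq> z" "S \<subseteq> N"
  shows "alpha (insert z N) (W_Y z W) k (insert z S) = alpha N W k S"
proof -
  note mem = mem_W_Y_iff[OF assms(2,3)]
  have zS: "\<And>S. S \<subseteq> N \<Longrightarrow> z \<notin> S" using assms(3) by auto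
  have inj: "inj_on (insert z) (Pow N)"
    by (intro inj_onI) (metis Diff_insert_absorb PowD zS)
  have "alpha (insert z N) (W_Y z W) k (insert z S)
      = alpha_fuel (Suc (Suc (card N))) (insert z N) (W_Y z W) k (insert z S)"
    unfolding alpha_def card_insert_disjoint[OF assms(1,3)] ..
  also have "\<dots> = alpha_fuel (Suc (Suc (card N))) N W k S"
    by (rule alpha_fuel_transfer[OF inj _ _ loyal_children_W_Y[OF assms(2,3)] assms(5)])
      (use zS assms(4) in \<open>auto simp: decisive_def yes_decisive_def no_decisive_def
         successful_def mem insert_Diff_if\<close>)
  also have "\<dots> = alpha N W k S"
    by (rule alpha_fuel_eq_alpha[OF assms(1,5)]) simp
  finally show ?thesis .
qed

lemma RM_yes_W_Y:
  assumes "finite N" "W \<subseteq> Pow N" "z \<notin> N" "i \<noteq> z"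
  shows "RM_yes (insert z N) (W_Y z W) i = RM_yes N W i / 2"
proof -
  have lost: "alpha (insert z N) (W_Y z W) i S = 0" if "S \<subseteq> N" "i \<in> S" for S
    using that assms(3) unfolding alpha_def
    by (intro alpha_fuel_unsuccessful) (auto simp: successful_def W_Y_def)
  have "(\<Sum>S | S \<subseteq> insert z N \<and> i \<in> S. alpha (insert z N) (W_Y z W) i S)
      = (\<Sum>S | S \<subseteq> N \<and> i \<in> S. alpha N W i S)"
    using assms alpha_W_Y[OF assms]
    by (auto simp: sum_subsets_insert lost intro!: sum.cong)
  then show ?thesis unfolding RM_yes_def using assms(1,3) by simp
qed

lemma mem_W_N_iff: "z \<notin> T \<Longrightarrow> T \<in> W_N z N W \<longleftrightarrow> T \<in> W"
  unfolding W_N_def by auto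

lemma insert_mem_W_N: "S \<subseteq> N \<Longrightarrow> insert z S \<in> W_N z N W"
  unfolding W_N_def by auto

lemma loyal_children_W_N:
  assumes "z \<notin> N" "S \<subseteq> N"
  shows "loyal_children (insert z N) (W_N z N W) S = loyal_children N W S"
proof -
  have zS: "z \<notin> S" using assms by auto
  have insert_mem: "insert m S \<in> W_N z N W \<longleftrightarrow> insert m S \<in> W" if "m \<in> N" for m
    using that zS assms(1) by (intro mem_W_N_iff) auto
  have "{m \<in> S. S - {m} \<in> W_N z N W} = {m \<in> S. S - {m} \<in> W}"
    using zS by (auto simp: mem_W_N_iff)
  moreover have "{m \<in> insert z N - S. insert m S \<notin> W_N z N W} = {m \<in> N - S. insert m S \<notin> W}"
    using insert_mem insert_mem_W_N[OF assms(2)] by auto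
  ultimately show ?thesis
    using zS by (simp add: loyal_children_eq_image mem_W_N_iff)
qed

lemma alpha_W_N:
  assumes "finite N" "z \<notin> N" "k \<noteq> z" "S \<subseteq> N"
  shows "alpha (insert z N) (W_N z N W) k S = alpha N W k S"
proof -
  have zS: "\<And>S. S \<subseteq> N \<Longrightarrow> z \<notin> S" using assms(2) by auto
  have "alpha (insert z N) (W_N z N W) k S
      = alpha_fuel (Suc (Suc (card N))) (insert z N) (W_N z N W) k (id S)"
    unfolding alpha_def card_insert_disjoint[OF assms(1,2)] by simp
  also have "\<dots> = alpha_fuel (Suc (Suc (card N))) N W k S"
    by (rule alpha_fuel_transfer[OF inj_on_id _ _ _ assms(4)])
      (use zS assms(2,3) in \<open>auto simp: decisive_def yes_decisive_def no_decisive_def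
         successful_def mem_W_N_iff loyal_children_W_N\<close>)
  also have "\<dots> = alpha N W k S"
    by (rule alpha_fuel_eq_alpha[OF assms(1,4)]) simp
  finally show ?thesis .
qed

lemma RM_no_W_N:
  assumes "finite N" "z \<notin> N" "i \<noteq> z"
  shows "RM_no (insert z N) (W_N z N W) i = RM_no N W i / 2"
proof -
  have won: "alpha (insert z N) (W_N z N W) i (insert z S) = 0" if "S \<subseteq> N" "i \<notin> S" for S
    using that assms(2,3) unfolding alpha_def
    by (intro alpha_fuel_unsuccessful) (auto simp: successful_def W_N_def)
  have "(\<Sum>S | S \<subseteq> insert z N \<and> i \<notin> S. alpha (insert z N) (W_N z N W) i S)
      = (\<Sum>S | S \<subseteq> N \<and> i \<notin> S. alpha N W i S)"
    using assms alpha_W_N[OF assms]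
    by (auto simp: sum_subsets_insert won intro!: sum.cong)
  then show ?thesis unfolding RM_no_def using assms(1,2) by simp
qed

text \<open>The non-dummy hypothesis is not needed: both powers are halved, and \<open>x / 0 = 0\<close> covers a
  vanishing denominator.\<close>
theorem theorem9:
  fixes N :: "'a set" and W :: "'a set set" and i j z :: 'a
  assumes "svg N W" and "i \<in> N" and "j \<in> N" and "\<not> dummy N W j" and "z \<notin> N"
  shows "RM_yes N W i / RM_yes N W j
           = RM_yes (insert z N) (W_Y z W) i / RM_yes (insert z N) (W_Y z W) j
       \<and> RM_no N W i / RM_no N W j
           = RM_no (insert z N) (W_N z N W) i / RM_no (insert z N) (W_N z N W) j"
proof -
  have "finite N" "W \<subseteq> Pow N" using svgD[OF \<open>svg N W\<close>] .
  moreover have "i \<noteq> z" "j \<noteq> z" using assms(2,3,5) by auto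
  ultimately show ?thesis using \<open>z \<notin> N\<close> by (simp add: RM_yes_W_Y RM_no_W_N)
qed

end
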